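(* Let $(X,d)$ be a complete metric space, $k\ge2$, $0<\rho<1$, $\mu:X^k\to X$ a nonexpansive, coordinatewise $\rho$-contractive $k$-mean, and $\le$ a closed partial order on $X$. Let $\mu_k=\mu$ and, for $n>k$, let $\mu_n$ be the iterated $\beta$-extensions. (1) If $\mu$ is monotone for $\le$, then $\mu_n$ is monotone for every $n\ge k$: $\mathbf{x}\le_n\mathbf{y}$ implies $\mu_n(\mathbf{x})\le\mu_n(\mathbf{y})$. (2) Let $\delta$ be another complete metric on $X$ and $\nu:X^k\to X$ a $k$-mean that is nonexpansive and coordinatewise $\rho$-contractive with respect to $\delta$, with iterated $\beta$-extensions $\nu_n$. Suppose $\le$ is closed in the product topology $(X,d)\times(X,\delta)$ and that $\mu$ or $\nu$ is monotone with respect to $\le$. If $\mu(\mathbf{x})\le\nu(\mathbf{x})$ for all $\mathbf{x}\in X^k$, then $\mu_n(\mathbf{x})\le\nu_n(\mathbf{x})$ for all $n\ge k$ and $\mathbf{x}\in X^n$.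
   Context: A $k$-mean is a map $\mu:X^k\to X$ with $\mu(x,\ldots,x)=x$. Nonexpansive: $d(\mu(\mathbf{x}),\mu(\mathbf{y}))\le\max_j d(x_j,y_j)$; coordinatewise $\rho$-contractive: $d(\mu(\mathbf{x}),\mu(\mathbf{y}))\le\rho\,d(x_j,y_j)$ when $\mathbf{x},\mathbf{y}$ differ only in coordinate $j$. $\le_n$ is the product order on $X^n$: $\mathbf{x}\le_n\mathbf{y}$ iff $x_i\le y_i$ for all $i$. A $k$-mean is monotone if $\mathbf{x}\le_k\mathbf{y}$ implies $\mu(\mathbf{x})\le\mu(\mathbf{y})$. A partial order is closed if its graph is closed in $X\times X$. Barycentric operator of a $k$-mean: $\beta(\mathbf{x})_j=\mu(x_1,\ldots,\widehat{x_j},\ldots,x_{k+1})$; $\mu_{n+1}$ is the unique continuous $(n+1)$-mean with $\beta_{\mu_n}^r(\mathbf{x})\to(\mu_{n+1}(\mathbf{x}),\ldots,\mu_{n+1}(\mathbf{x}))$ for all $\mathbf{x}$ (which exists under these hypotheses). *)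

theory Defs
  imports "HOL-Analysis.Analysis"
begin

text \<open>Tuples in X^n are lists of length n. A metric on X is a function
  d :: 'a => 'a => real with Metric_space UNIV d.\<close>

definition is_mean :: "nat \<Rightarrow> ('a list \<Rightarrow> 'a) \<Rightarrow> bool" where
  "is_mean k mu \<longleftrightarrow> (\<forall>x. mu (replicate k x) = x)"

definition nonexpansive_mean :: "('a \<Rightarrow> 'a \<Rightarrow> real) \<Rightarrow> nat \<Rightarrow> ('a list \<Rightarrow> 'a) \<Rightarrow> bool" where
  "nonexpansive_mean d k mu \<longleftrightarrow>
     (\<forall>x y. length x = k \<longrightarrow> length y = k \<longrightarrow>
        d (mu x) (mu y) \<le> Max ((\<lambda>j. d (x ! j) (y ! j)) ` {..<k}))"

definition coord_contractive :: "('a \<Rightarrow> 'a \<Rightarrow> real) \<Rightarrow> real \<Rightarrow> nat \<Rightarrow> ('a list \<Rightarrow> 'a) \<Rightarrow> bool" where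
  "coord_contractive d \<rho> k mu \<longleftrightarrow>
     (\<forall>x y j. length x = k \<longrightarrow> length y = k \<longrightarrow> j < k \<longrightarrow>
        (\<forall>i<k. i \<noteq> j \<longrightarrow> x ! i = y ! i) \<longrightarrow>
        d (mu x) (mu y) \<le> \<rho> * d (x ! j) (y ! j))"

definition monotone_mean :: "('a \<Rightarrow> 'a \<Rightarrow> bool) \<Rightarrow> nat \<Rightarrow> ('a list \<Rightarrow> 'a) \<Rightarrow> bool" where
  "monotone_mean le n mu \<longleftrightarrow>
     (\<forall>x y. length x = n \<longrightarrow> length y = n \<longrightarrow> list_all2 le x y \<longrightarrow> le (mu x) (mu y))"

definition del_nth :: "nat \<Rightarrow> 'a list \<Rightarrow> 'a list" where
  "del_nth j xs = take j xs @ drop (Suc j) xs"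

definition beta_op :: "('a list \<Rightarrow> 'a) \<Rightarrow> 'a list \<Rightarrow> 'a list" where
  "beta_op mu xs = map (\<lambda>j. mu (del_nth j xs)) [0..<length xs]"

definition beta_ext :: "('a \<Rightarrow> 'a \<Rightarrow> real) \<Rightarrow> ('a list \<Rightarrow> 'a) \<Rightarrow> 'a list \<Rightarrow> 'a" where
  "beta_ext d mu xs = (THE z. \<forall>j < length xs.
       limitin (Metric_space.mtopology UNIV d) (\<lambda>r. ((beta_op mu ^^ r) xs) ! j) z sequentially)"

text \<open>iter_ext d mu m is mu_{k+m}, where mu = mu_k.\<close>
primrec iter_ext :: "('a \<Rightarrow> 'a \<Rightarrow> real) \<Rightarrow> ('a list \<Rightarrow> 'a) \<Rightarrow> nat \<Rightarrow> 'a list \<Rightarrow> 'a" where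
  "iter_ext d mu 0 = mu"
| "iter_ext d mu (Suc m) = beta_ext d (iter_ext d mu m)"

definition closed_partial_order :: "'a topology \<Rightarrow> 'a topology \<Rightarrow> ('a \<Rightarrow> 'a \<Rightarrow> bool) \<Rightarrow> bool" where
  "closed_partial_order T1 T2 le \<longleftrightarrow>
     (\<forall>x. le x x) \<and> (\<forall>x y. le x y \<longrightarrow> le y x \<longrightarrow> x = y) \<and>
     (\<forall>x y z. le x y \<longrightarrow> le y z \<longrightarrow> le x z) \<and>
     closedin (prod_topology T1 T2) {(x, y). le x y}"

end

theory Submission
  imports Defs
begin

text \<open>Iterating \<open>\<beta>\<close> on an \<open>(n+1)\<close>-tuple, coordinatewise \<open>\<rho>\<close>-contractivity shrinks the
  distances between adjacent entries by the factor \<open>\<rho>\<close>; one further step of \<open>\<beta>\<close> then makes all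
  entries that close to each other, by nonexpansivity. Since \<open>\<beta>\<close> fixes constant tuples,
  nonexpansivity also keeps every later iterate inside each ball around an entry that contains the
  whole tuple. Hence all coordinates of \<open>\<beta>\<^sup>r(x)\<close> converge to one common limit, and the mean
  property, nonexpansivity and contractivity pass to the limit map, so the construction can be
  iterated.

  For the comparison, call \<open>\<mu> \<le> \<nu>\<close> monotonically if \<open>x \<le>\<^sub>n y\<close> implies \<open>\<mu>(x) \<le> \<nu>(y)\<close>. This
  property is inherited by the barycentric operators, hence by all their iterates, and closedness of
  \<open>\<le>\<close> in \<open>(X,d) \<times> (X,\<delta>)\<close> passes it to the limits \<open>\<mu>\<^sub>n\<^sub>+\<^sub>1\<close>, \<open>\<nu>\<^sub>n\<^sub>+\<^sub>1\<close>. Monotonicity of \<open>\<mu>\<close> or \<open>\<nu>\<close>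
  together with \<open>\<mu> \<le> \<nu>\<close> and transitivity gives it for \<open>k\<close>; part (1) is the case \<open>\<nu> = \<mu>\<close>.\<close>

lemma length_del_nth: "j < length xs \<Longrightarrow> length (del_nth j xs) = length xs - 1"
  by (simp add: del_nth_def)

lemma nth_del_nth:
  "j < length xs \<Longrightarrow> i < length xs - 1 \<Longrightarrow>
   del_nth j xs ! i = (if i < j then xs ! i else xs ! Suc i)"
  by (auto simp: del_nth_def nth_append min_def)

lemma del_nth_replicate: "j < m \<Longrightarrow> del_nth j (replicate m a) = replicate (m - 1) a"
  by (simp add: del_nth_def replicate_add[symmetric])

lemma list_all2_del_nth: "list_all2 P xs ys \<Longrightarrow> list_all2 P (del_nth j xs) (del_nth j ys)"
  unfolding del_nth_def by (intro list_all2_appendI list_all2_takeI list_all2_dropI)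

lemma length_beta_op [simp]: "length (beta_op mu xs) = length xs"
  by (simp add: beta_op_def)

lemma nth_beta_op: "j < length xs \<Longrightarrow> beta_op mu xs ! j = mu (del_nth j xs)"
  by (simp add: beta_op_def)

lemma length_beta_op_pow [simp]: "length ((beta_op mu ^^ r) xs) = length xs"
  by (induction r) auto

lemma beta_op_replicate:
  "is_mean (m - 1) mu \<Longrightarrow> beta_op mu (replicate m a) = replicate m a"
  by (intro nth_equalityI)
    (auto simp: nth_beta_op is_mean_def del_nth_replicate simp del: replicate.simps)

lemma beta_op_pow_replicate:
  "is_mean (m - 1) mu \<Longrightarrow> (beta_op mu ^^ r) (replicate m a) = replicate m a"
  by (induction r) (auto simp: beta_op_replicate simp del: replicate.simps)

definition monotone_le ::
  "('a \<Rightarrow> 'a \<Rightarrow> bool) \<Rightarrow> nat \<Rightarrow> ('a list \<Rightarrow> 'a) \<Rightarrow> ('a list \<Rightarrow> 'a) \<Rightarrow> bool" where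
  "monotone_le le n mu nu \<longleftrightarrow>
     (\<forall>x y. length x = n \<longrightarrow> length y = n \<longrightarrow> list_all2 le x y \<longrightarrow> le (mu x) (nu y))"

lemma list_all2_beta_op:
  assumes "monotone_le le (length xs - 1) mu nu" and "list_all2 le xs ys"
  shows "list_all2 le (beta_op mu xs) (beta_op nu ys)"
proof -
  have "length ys = length xs"
    using assms(2) by (simp add: list_all2_lengthD)
  moreover have "le (mu (del_nth j xs)) (nu (del_nth j ys))" if "j < length xs" for j
    using assms that list_all2_del_nth[OF assms(2), of j] \<open>length ys = length xs\<close>
    by (simp add: monotone_le_def length_del_nth)
  ultimately show ?thesis
    by (simp add: list_all2_conv_all_nth nth_beta_op)
qed

lemma list_all2_beta_op_pow:
  assumes "monotone_le le (length xs - 1) mu nu" and "list_all2 le xs ys"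
  shows "list_all2 le ((beta_op mu ^^ r) xs) ((beta_op nu ^^ r) ys)"
  by (induction r) (use assms in \<open>auto intro: list_all2_beta_op\<close>)

lemma (in Metric_space) limit_dist_le:
  assumes "limitin mtopology f a sequentially" and "limitin mtopology g b sequentially"
    and "eventually (\<lambda>s. d (f s) (g s) \<le> c) sequentially"
  shows "d a b \<le> c"
proof -
  have "a \<in> M" "b \<in> M" and f: "((\<lambda>s. d (f s) a) \<longlongrightarrow> 0) sequentially"
    and g: "((\<lambda>s. d (g s) b) \<longlongrightarrow> 0) sequentially"
    and in_M: "eventually (\<lambda>s. f s \<in> M \<and> g s \<in> M) sequentially"
    using assms(1,2) by (auto simp: limitin_metric_dist_null eventually_conj_iff)
  have ev: "eventually (\<lambda>s. d a b \<le> d (f s) a + c + d (g s) b) sequentially"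
    using assms(3) in_M
  proof eventually_elim
    case (elim s)
    then have "f s \<in> M" "g s \<in> M" by auto
    then show ?case
      using elim triangle[OF \<open>a \<in> M\<close> \<open>f s \<in> M\<close> \<open>b \<in> M\<close>]
        triangle[OF \<open>f s \<in> M\<close> \<open>g s \<in> M\<close> \<open>b \<in> M\<close>] commute[of a "f s"]
      by linarith
  qed
  have "((\<lambda>s. d (f s) a + c + d (g s) b) \<longlongrightarrow> 0 + c + 0) sequentially"
    by (intro tendsto_add f g tendsto_const)
  then show ?thesis
    using tendsto_lowerbound[OF _ ev] by simp
qed

lemma (in Metric_space) common_limit_of_uniform_Cauchy:
  assumes "mcomplete" and "a \<in> I" and in_M: "\<And>i s. i \<in> I \<Longrightarrow> f i s \<in> M"
    and "b \<longlonglongrightarrow> 0"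
    and bound: "\<And>r s t i j. i \<in> I \<Longrightarrow> j \<in> I \<Longrightarrow> r \<le> s \<Longrightarrow> r \<le> t \<Longrightarrow> d (f i s) (f j t) \<le> b r"
  shows "\<exists>z. \<forall>i\<in>I. limitin mtopology (f i) z sequentially"
proof -
  have "MCauchy (f a)"
    unfolding MCauchy_def
  proof (intro conjI allI impI)
    fix \<epsilon> :: real assume "\<epsilon> > 0"
    then obtain N where "b N < \<epsilon>"
      using \<open>b \<longlonglongrightarrow> 0\<close> by (metis eventually_sequentially order_refl order_tendstoD(2))
    then show "\<exists>N. \<forall>s t. N \<le> s \<longrightarrow> N \<le> t \<longrightarrow> d (f a s) (f a t) < \<epsilon>"
      using bound[OF \<open>a \<in> I\<close> \<open>a \<in> I\<close>] by (meson le_less_trans)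
  qed (use in_M \<open>a \<in> I\<close> in auto)
  then obtain z where z: "limitin mtopology (f a) z sequentially"
    using \<open>mcomplete\<close> by (auto simp: mcomplete_def)
  have "limitin mtopology (f i) z sequentially" if "i \<in> I" for i
  proof -
    have "z \<in> M" and z0: "((\<lambda>s. d (f a s) z) \<longlongrightarrow> 0) sequentially"
      using z by (auto simp: limitin_metric_dist_null)
    have "d (f i s) z \<le> b s + d (f a s) z" for s
      using triangle[of "f i s" "f a s" z] bound[OF that \<open>a \<in> I\<close>, of s s s]
        in_M[OF that] in_M[OF \<open>a \<in> I\<close>] \<open>z \<in> M\<close> by simp
    then have upper: "eventually (\<lambda>s. d (f i s) z \<le> b s + d (f a s) z) sequentially"
      by (rule always_eventually[OF allI])
    have lower: "eventually (\<lambda>s. 0 \<le> d (f i s) z) sequentially"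
      using in_M[OF that] \<open>z \<in> M\<close> by simp
    have "((\<lambda>s. b s + d (f a s) z) \<longlongrightarrow> 0 + 0) sequentially"
      by (intro tendsto_add \<open>b \<longlonglongrightarrow> 0\<close> z0)
    then have "((\<lambda>s. d (f i s) z) \<longlongrightarrow> 0) sequentially"
      using tendsto_sandwich[OF lower upper tendsto_const] by simp
    with \<open>z \<in> M\<close> in_M[OF that] show ?thesis
      by (simp add: limitin_metric_dist_null)
  qed
  then show ?thesis by blast
qed

locale contractive_mean = Metric_space "UNIV :: 'a set" d
  for d :: "'a \<Rightarrow> 'a \<Rightarrow> real" and \<rho> :: real and n :: nat and mu :: "'a list \<Rightarrow> 'a" +
  assumes complete: "mcomplete"
    and rho_nonneg: "0 \<le> \<rho>" and rho_less_1: "\<rho> < 1"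
    and arity_pos: "1 \<le> n"
    and mean: "is_mean n mu"
    and nonexpansive: "nonexpansive_mean d n mu"
    and contractive: "coord_contractive d \<rho> n mu"
begin

lemma mu_dist_le:
  assumes "length xs = n" and "length ys = n" and "\<forall>p<n. d (xs ! p) (ys ! p) \<le> c"
  shows "d (mu xs) (mu ys) \<le> c"
proof -
  have "d (mu xs) (mu ys) \<le> Max ((\<lambda>j. d (xs ! j) (ys ! j)) ` {..<n})"
    using nonexpansive assms(1,2) by (simp add: nonexpansive_mean_def)
  also have "\<dots> \<le> c"
    using assms(3) arity_pos by (subst Max_le_iff) (auto simp: lessThan_empty_iff)
  finally show ?thesis .
qed

lemma beta_op_dist_le:
  assumes "length xs = Suc n" and "length ys = Suc n"
    and "\<forall>i<Suc n. d (xs ! i) (ys ! i) \<le> c"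
  shows "\<forall>j<Suc n. d (beta_op mu xs ! j) (beta_op mu ys ! j) \<le> c"
proof (intro allI impI)
  fix j assume "j < Suc n"
  then have "\<forall>p<n. d (del_nth j xs ! p) (del_nth j ys ! p) \<le> c"
    using assms by (auto simp: nth_del_nth)
  then show "d (beta_op mu xs ! j) (beta_op mu ys ! j) \<le> c"
    using mu_dist_le \<open>j < Suc n\<close> assms(1,2) by (simp add: nth_beta_op length_del_nth)
qed

lemma beta_op_pow_dist_le:
  assumes "length xs = Suc n" and "length ys = Suc n"
    and "\<forall>i<Suc n. d (xs ! i) (ys ! i) \<le> c"
  shows "\<forall>j<Suc n. d ((beta_op mu ^^ r) xs ! j) ((beta_op mu ^^ r) ys ! j) \<le> c"
  by (induction r) (use assms beta_op_dist_le in auto)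

lemma beta_op_adjacent_dist_le:
  assumes "length ys = Suc n" and "\<forall>p<n. d (ys ! p) (ys ! Suc p) \<le> c"
  shows "\<forall>p<n. d (beta_op mu ys ! p) (beta_op mu ys ! Suc p) \<le> \<rho> * c"
proof (intro allI impI)
  fix p assume "p < n"
  have "length (del_nth p ys) = n" "length (del_nth (Suc p) ys) = n"
    using \<open>p < n\<close> assms(1) by (auto simp: length_del_nth)
  moreover have "\<forall>i<n. i \<noteq> p \<longrightarrow> del_nth p ys ! i = del_nth (Suc p) ys ! i"
    using \<open>p < n\<close> assms(1) by (auto simp: nth_del_nth)
  ultimately have "d (mu (del_nth p ys)) (mu (del_nth (Suc p) ys))
      \<le> \<rho> * d (del_nth p ys ! p) (del_nth (Suc p) ys ! p)"
    using contractive \<open>p < n\<close> by (simp add: coord_contractive_def)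
  also have "\<dots> = \<rho> * d (ys ! p) (ys ! Suc p)"
    using \<open>p < n\<close> assms(1) by (simp add: nth_del_nth commute)
  also have "\<dots> \<le> \<rho> * c"
    using assms(2) \<open>p < n\<close> rho_nonneg by (simp add: mult_left_mono)
  finally show "d (beta_op mu ys ! p) (beta_op mu ys ! Suc p) \<le> \<rho> * c"
    using \<open>p < n\<close> assms(1) by (simp add: nth_beta_op)
qed

lemma beta_op_diameter_le:
  assumes "length ys = Suc n" and "\<forall>p<n. d (ys ! p) (ys ! Suc p) \<le> c"
  shows "\<forall>i<Suc n. \<forall>j<Suc n. d (beta_op mu ys ! i) (beta_op mu ys ! j) \<le> c"
proof (intro allI impI)
  fix i j assume "i < Suc n" "j < Suc n"
  have "d (ys ! 0) (ys ! Suc 0) \<le> c"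
    using assms(2) arity_pos by simp
  then have "0 \<le> c"
    using nonneg order_trans by blast
  \<comment> \<open>the \<open>p\<close>-th entries of two deletions of \<open>ys\<close> are equal or adjacent in \<open>ys\<close>\<close>
  have "\<forall>p<n. d (del_nth i ys ! p) (del_nth j ys ! p) \<le> c"
    using \<open>i < Suc n\<close> \<open>j < Suc n\<close> assms \<open>0 \<le> c\<close> by (auto simp: nth_del_nth commute)
  then show "d (beta_op mu ys ! i) (beta_op mu ys ! j) \<le> c"
    using mu_dist_le \<open>i < Suc n\<close> \<open>j < Suc n\<close> assms(1) by (simp add: nth_beta_op length_del_nth)
qed

lemma beta_op_coord_dist_le:
  assumes "length xs = Suc n" and "length ys = Suc n" and "j < Suc n"
    and "\<forall>i<Suc n. i \<noteq> j \<longrightarrow> xs ! i = ys ! i"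
  shows "\<forall>i<Suc n. d (beta_op mu xs ! i) (beta_op mu ys ! i) \<le> \<rho> * d (xs ! j) (ys ! j)"
proof (intro allI impI)
  fix i assume "i < Suc n"
  show "d (beta_op mu xs ! i) (beta_op mu ys ! i) \<le> \<rho> * d (xs ! j) (ys ! j)"
  proof (cases "i = j")
    case True
    then have "del_nth i xs = del_nth i ys"
      using assms by (intro nth_equalityI) (auto simp: length_del_nth nth_del_nth)
    then show ?thesis
      using \<open>i < Suc n\<close> assms(1,2) rho_nonneg by (simp add: nth_beta_op)
  next
    case False
    \<comment> \<open>after deleting entry \<open>i\<close>, entry \<open>j\<close> of \<open>xs\<close> sits at position \<open>q\<close>\<close>
    define q where "q = (if j < i then j else j - 1)"
    have "q < n"
      using False \<open>i < Suc n\<close> assms(3) by (auto simp: q_def)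
    have "length (del_nth i xs) = n" "length (del_nth i ys) = n"
      using \<open>i < Suc n\<close> assms(1,2) by (auto simp: length_del_nth)
    moreover have "\<forall>p<n. p \<noteq> q \<longrightarrow> del_nth i xs ! p = del_nth i ys ! p"
      using \<open>i < Suc n\<close> assms False by (auto simp: q_def nth_del_nth)
    ultimately have "d (mu (del_nth i xs)) (mu (del_nth i ys))
        \<le> \<rho> * d (del_nth i xs ! q) (del_nth i ys ! q)"
      using contractive \<open>q < n\<close> by (simp add: coord_contractive_def)
    moreover have "del_nth i xs ! q = xs ! j" "del_nth i ys ! q = ys ! j"
      using \<open>q < n\<close> \<open>i < Suc n\<close> assms(1,2) False by (auto simp: q_def nth_del_nth)
    ultimately show ?thesis
      using \<open>i < Suc n\<close> assms(1,2) by (simp add: nth_beta_op)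
  qed
qed

lemma beta_op_pow_adjacent_dist_le:
  assumes "length xs = Suc n" and "\<forall>p<n. d (xs ! p) (xs ! Suc p) \<le> c"
  shows "\<forall>p<n. d ((beta_op mu ^^ r) xs ! p) ((beta_op mu ^^ r) xs ! Suc p) \<le> \<rho> ^ r * c"
proof (induction r)
  case (Suc r)
  then show ?case
    using beta_op_adjacent_dist_le[of "(beta_op mu ^^ r) xs" "\<rho> ^ r * c"] assms(1)
    by (simp add: mult.assoc)
qed (use assms(2) in simp)

lemma beta_op_pow_dist_entry_le:
  assumes "length ys = Suc n" and "i < Suc n" and "j < Suc n"
    and "\<forall>i'<Suc n. d (ys ! i') (ys ! i) \<le> c"
  shows "d ((beta_op mu ^^ r) ys ! j) (ys ! i) \<le> c"
proof -
  define a where "a = replicate (Suc n) (ys ! i)"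
  have "length a = Suc n" and "\<forall>i'<Suc n. d (ys ! i') (a ! i') \<le> c"
    using assms(4) by (simp_all add: a_def del: replicate_Suc)
  then have "d ((beta_op mu ^^ r) ys ! j) ((beta_op mu ^^ r) a ! j) \<le> c"
    using beta_op_pow_dist_le[OF assms(1)] assms(3) by blast
  moreover have "(beta_op mu ^^ r) a = a"
    using mean by (simp add: a_def beta_op_pow_replicate del: replicate_Suc)
  ultimately show ?thesis
    using assms(3) by (simp add: a_def del: replicate_Suc)
qed

lemma beta_op_pow_tail_dist_le:
  assumes "length xs = Suc n" and "\<forall>p<n. d (xs ! p) (xs ! Suc p) \<le> c"
    and "r \<le> s" and "i < Suc n" and "j < Suc n"
  shows "d ((beta_op mu ^^ Suc s) xs ! j) ((beta_op mu ^^ Suc r) xs ! i) \<le> \<rho> ^ r * c"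
proof -
  let ?y = "(beta_op mu ^^ Suc r) xs"
  have "\<forall>i'<Suc n. d (?y ! i') (?y ! i) \<le> \<rho> ^ r * c"
    using beta_op_diameter_le[OF _ beta_op_pow_adjacent_dist_le[OF assms(1,2)]] assms(1,4) by simp
  then have "d ((beta_op mu ^^ (s - r)) ?y ! j) (?y ! i) \<le> \<rho> ^ r * c"
    using beta_op_pow_dist_entry_le assms by simp
  moreover have "(beta_op mu ^^ (s - r)) ?y = (beta_op mu ^^ Suc s) xs"
    using assms(3) funpow_add[of "s - r" "Suc r" "beta_op mu"] by simp
  ultimately show ?thesis
    by simp
qed

lemma beta_op_pow_converges:
  assumes "length xs = Suc n"
  shows "\<exists>z. \<forall>j<Suc n. limitin mtopology (\<lambda>r. (beta_op mu ^^ r) xs ! j) z sequentially"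
proof -
  define c where "c = (\<Sum>p<n. d (xs ! p) (xs ! Suc p))"
  have "\<forall>p<n. d (xs ! p) (xs ! Suc p) \<le> c"
    unfolding c_def by (auto intro: member_le_sum)
  note close = beta_op_pow_tail_dist_le[OF assms this]
  have bound: "d ((beta_op mu ^^ Suc s) xs ! i) ((beta_op mu ^^ Suc t) xs ! j) \<le> 2 * (\<rho> ^ r * c)"
    if "i \<in> {..<Suc n}" "j \<in> {..<Suc n}" "r \<le> s" "r \<le> t" for r s t i j
  proof -
    let ?z = "(beta_op mu ^^ Suc r) xs ! 0"
    have "d ((beta_op mu ^^ Suc s) xs ! i) ?z \<le> \<rho> ^ r * c" "d ((beta_op mu ^^ Suc t) xs ! j) ?z \<le> \<rho> ^ r * c"
      using close that by simp_all
    then show ?thesis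
      using triangle[of "(beta_op mu ^^ Suc s) xs ! i" ?z "(beta_op mu ^^ Suc t) xs ! j", OF UNIV_I UNIV_I UNIV_I]
        commute[of ?z "(beta_op mu ^^ Suc t) xs ! j"]
      by linarith
  qed
  have lim: "(\<lambda>r. 2 * (\<rho> ^ r * c)) \<longlonglongrightarrow> 0"
    using rho_nonneg rho_less_1 by (intro tendsto_mult_right_zero tendsto_mult_left_zero LIMSEQ_power_zero) simp
  have "\<exists>z. \<forall>j\<in>{..<Suc n}. limitin mtopology (\<lambda>s. (beta_op mu ^^ Suc s) xs ! j) z sequentially"
    by (rule common_limit_of_uniform_Cauchy[OF complete, where a = 0 and b = "\<lambda>r. 2 * (\<rho> ^ r * c)"])
      (use lim bound in simp_all)
  then obtain z where "\<forall>j\<in>{..<Suc n}. limitin mtopology (\<lambda>s. (beta_op mu ^^ Suc s) xs ! j) z sequentially" ..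
  then have "limitin mtopology (\<lambda>r. (beta_op mu ^^ r) xs ! j) z sequentially" if "j < Suc n" for j
    using that limitin_sequentially_offset_rev[of mtopology "\<lambda>r. (beta_op mu ^^ r) xs ! j" 1 z] by simp
  then show ?thesis
    by blast
qed

lemma beta_ext_limit:
  assumes "length xs = Suc n" and "j < Suc n"
  shows "limitin mtopology (\<lambda>r. (beta_op mu ^^ r) xs ! j) (beta_ext d mu xs) sequentially"
proof -
  obtain z where z: "\<forall>j<Suc n. limitin mtopology (\<lambda>r. (beta_op mu ^^ r) xs ! j) z sequentially"
    using beta_op_pow_converges[OF assms(1)] by blast
  have "beta_ext d mu xs = z"
    unfolding beta_ext_def
  proof (rule the_equality)
    fix z' assume "\<forall>j<length xs. limitin mtopology (\<lambda>r. (beta_op mu ^^ r) xs ! j) z' sequentially"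
    then show "z' = z"
      using z assms(1) limitin_metric_unique trivial_limit_sequentially by (metis zero_less_Suc)
  qed (use z assms(1) in simp)
  with z assms(2) show ?thesis by simp
qed

lemma beta_ext_dist_le:
  assumes "length xs = Suc n" and "length ys = Suc n"
    and "\<forall>j<Suc n. d (beta_op mu xs ! j) (beta_op mu ys ! j) \<le> c"
  shows "d (beta_ext d mu xs) (beta_ext d mu ys) \<le> c"
proof (rule limit_dist_le[OF beta_ext_limit[OF assms(1)] beta_ext_limit[OF assms(2)]])
  have "d ((beta_op mu ^^ Suc r) xs ! 0) ((beta_op mu ^^ Suc r) ys ! 0) \<le> c" for r
    using beta_op_pow_dist_le[of "beta_op mu xs" "beta_op mu ys" c r] assms
    by (simp add: funpow_Suc_right del: funpow.simps)
  then show "eventually (\<lambda>r. d ((beta_op mu ^^ r) xs ! 0) ((beta_op mu ^^ r) ys ! 0) \<le> c) sequentially"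
    unfolding eventually_sequentially by (metis Suc_le_D)
qed simp_all

lemma contractive_mean_beta_ext: "contractive_mean d \<rho> (Suc n) (beta_ext d mu)"
proof unfold_locales
  show "is_mean (Suc n) (beta_ext d mu)"
    unfolding is_mean_def
  proof
    fix a :: 'a
    have "limitin mtopology (\<lambda>r. a) (beta_ext d mu (replicate (Suc n) a)) sequentially"
      using beta_ext_limit[of "replicate (Suc n) a" 0] mean
      by (simp add: beta_op_pow_replicate del: replicate_Suc)
    moreover have "limitin mtopology (\<lambda>r. a) a sequentially"
      by simp
    ultimately show "beta_ext d mu (replicate (Suc n) a) = a"
      using limitin_metric_unique trivial_limit_sequentially by blast
  qed
  show "nonexpansive_mean d (Suc n) (beta_ext d mu)"
    unfolding nonexpansive_mean_def
  proof (intro allI impI)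
    fix xs ys :: "'a list" assume len: "length xs = Suc n" "length ys = Suc n"
    have "\<forall>i<Suc n. d (xs ! i) (ys ! i) \<le> Max ((\<lambda>j. d (xs ! j) (ys ! j)) ` {..<Suc n})"
      by simp
    then show "d (beta_ext d mu xs) (beta_ext d mu ys) \<le> Max ((\<lambda>j. d (xs ! j) (ys ! j)) ` {..<Suc n})"
      using beta_ext_dist_le[OF len beta_op_dist_le[OF len]] by blast
  qed
  show "coord_contractive d \<rho> (Suc n) (beta_ext d mu)"
    unfolding coord_contractive_def
    using beta_ext_dist_le beta_op_coord_dist_le by simp
qed (use complete rho_nonneg rho_less_1 in auto)

end

lemma contractive_mean_iter_ext:
  assumes "contractive_mean d \<rho> n mu"
  shows "contractive_mean d \<rho> (n + m) (iter_ext d mu m)"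
  using assms by (induction m) (simp_all add: contractive_mean.contractive_mean_beta_ext)

lemma monotone_le_beta_ext:
  assumes mu: "contractive_mean d \<rho> n mu" and nu: "contractive_mean e \<rho>' n nu"
    and closed: "closedin (prod_topology (Metric_space.mtopology UNIV d) (Metric_space.mtopology UNIV e))
      {(x, y). le x y}"
    and "monotone_le le n mu nu"
  shows "monotone_le le (Suc n) (beta_ext d mu) (beta_ext e nu)"
  unfolding monotone_le_def
proof (intro allI impI)
  fix xs ys :: "'a list"
  assume lx: "length xs = Suc n" and ly: "length ys = Suc n" and "list_all2 le xs ys"
  let ?f = "\<lambda>r. ((beta_op mu ^^ r) xs ! 0, (beta_op nu ^^ r) ys ! 0)"
  have lim: "limitin (prod_topology (Metric_space.mtopology UNIV d) (Metric_space.mtopology UNIV e))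
      ?f (beta_ext d mu xs, beta_ext e nu ys) sequentially"
    using contractive_mean.beta_ext_limit[OF mu lx] contractive_mean.beta_ext_limit[OF nu ly]
    by (simp add: limitin_pairwise o_def)
  have "list_all2 le ((beta_op mu ^^ r) xs) ((beta_op nu ^^ r) ys)" for r
    using list_all2_beta_op_pow[of le xs mu nu ys] \<open>monotone_le le n mu nu\<close> \<open>list_all2 le xs ys\<close> lx
    by simp
  then have ev: "eventually (\<lambda>r. ?f r \<in> {(x, y). le x y}) sequentially"
    using lx by (simp add: list_all2_nthD)
  have "(beta_ext d mu xs, beta_ext e nu ys) \<in> {(x, y). le x y}"
    by (rule limitin_closedin[OF lim closed ev trivial_limit_sequentially])
  then show "le (beta_ext d mu xs) (beta_ext e nu ys)"
    by simp
qed

lemma monotone_le_iter_ext: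
  assumes "contractive_mean d \<rho> n mu" and "contractive_mean e \<rho>' n nu"
    and "closedin (prod_topology (Metric_space.mtopology UNIV d) (Metric_space.mtopology UNIV e))
      {(x, y). le x y}"
    and "monotone_le le n mu nu"
  shows "monotone_le le (n + m) (iter_ext d mu m) (iter_ext e nu m)"
proof (induction m)
  case (Suc m)
  from monotone_le_beta_ext[OF contractive_mean_iter_ext[OF assms(1)]
      contractive_mean_iter_ext[OF assms(2)] assms(3) Suc.IH]
  show ?case
    by simp
qed (use assms in simp)

lemma monotone_le_of_pointwise_le:
  assumes "\<forall>x y z. le x y \<longrightarrow> le y z \<longrightarrow> le x z"
    and "monotone_mean le n mu \<or> monotone_mean le n nu"
    and "\<forall>x. length x = n \<longrightarrow> le (mu x) (nu x)"
  shows "monotone_le le n mu nu"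
  unfolding monotone_le_def
proof (intro allI impI)
  fix xs ys :: "'a list"
  assume "length xs = n" "length ys = n" "list_all2 le xs ys"
  with assms(3) have "le (mu xs) (nu xs)" "le (mu ys) (nu ys)"
    by simp_all
  from assms(2) show "le (mu xs) (nu ys)"
  proof
    assume "monotone_mean le n mu"
    then have "le (mu xs) (mu ys)"
      using \<open>length xs = n\<close> \<open>length ys = n\<close> \<open>list_all2 le xs ys\<close> by (simp add: monotone_mean_def)
    with \<open>le (mu ys) (nu ys)\<close> assms(1) show ?thesis
      by blast
  next
    assume "monotone_mean le n nu"
    then have "le (nu xs) (nu ys)"
      using \<open>length xs = n\<close> \<open>length ys = n\<close> \<open>list_all2 le xs ys\<close> by (simp add: monotone_mean_def)
    with \<open>le (mu xs) (nu xs)\<close> assms(1) show ?thesis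
      by blast
  qed
qed

lemma monotone_mean_iter_ext:
  assumes "contractive_mean d \<rho> n mu"
    and "closedin (prod_topology (Metric_space.mtopology UNIV d) (Metric_space.mtopology UNIV d))
      {(x, y). le x y}"
    and "monotone_mean le n mu"
  shows "monotone_mean le (n + m) (iter_ext d mu m)"
  using monotone_le_iter_ext[OF assms(1,1,2)] assms(3)
  by (simp add: monotone_mean_def monotone_le_def)

lemma iter_ext_le_iter_ext:
  assumes "contractive_mean d \<rho> n mu" and "contractive_mean e \<rho>' n nu"
    and "closedin (prod_topology (Metric_space.mtopology UNIV d) (Metric_space.mtopology UNIV e))
      {(x, y). le x y}"
    and "\<forall>x. le x x" and "\<forall>x y z. le x y \<longrightarrow> le y z \<longrightarrow> le x z"
    and "monotone_mean le n mu \<or> monotone_mean le n nu"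
    and "\<forall>x. length x = n \<longrightarrow> le (mu x) (nu x)"
    and "length xs = n + m"
  shows "le (iter_ext d mu m xs) (iter_ext e nu m xs)"
proof -
  have "monotone_le le (n + m) (iter_ext d mu m) (iter_ext e nu m)"
    using monotone_le_iter_ext[OF assms(1-3) monotone_le_of_pointwise_le[OF assms(5-7)]] .
  moreover have "list_all2 le xs xs"
    using assms(4) by (simp add: list_all2_conv_all_nth)
  ultimately show ?thesis
    using assms(8) by (simp add: monotone_le_def)
qed

theorem theorem9p2:
  fixes d :: "'a \<Rightarrow> 'a \<Rightarrow> real" and k :: nat and \<rho> :: real
    and mu :: "'a list \<Rightarrow> 'a" and le :: "'a \<Rightarrow> 'a \<Rightarrow> bool"
  assumes "Metric_space UNIV d" and "Metric_space.mcomplete UNIV d"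
    and "k \<ge> 2" and "0 < \<rho>" and "\<rho> < 1"
    and "is_mean k mu" and "nonexpansive_mean d k mu" and "coord_contractive d \<rho> k mu"
    and "closed_partial_order (Metric_space.mtopology UNIV d) (Metric_space.mtopology UNIV d) le"
  shows "(monotone_mean le k mu \<longrightarrow>
            (\<forall>n\<ge>k. monotone_mean le n (iter_ext d mu (n - k))))
       \<and> (\<forall>(\<delta> :: 'a \<Rightarrow> 'a \<Rightarrow> real) (nu :: 'a list \<Rightarrow> 'a).
            Metric_space UNIV \<delta> \<and> Metric_space.mcomplete UNIV \<delta> \<and>
            is_mean k nu \<and> nonexpansive_mean \<delta> k nu \<and> coord_contractive \<delta> \<rho> k nu \<and>
            closedin (prod_topology (Metric_space.mtopology UNIV d) (Metric_space.mtopology UNIV \<delta>))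
              {(x, y). le x y} \<and>
            (monotone_mean le k mu \<or> monotone_mean le k nu) \<and>
            (\<forall>x. length x = k \<longrightarrow> le (mu x) (nu x))
            \<longrightarrow> (\<forall>n\<ge>k. \<forall>x. length x = n \<longrightarrow>
                   le (iter_ext d mu (n - k) x) (iter_ext \<delta> nu (n - k) x)))"
proof -
  have mu: "contractive_mean d \<rho> k mu"
    using assms by (simp add: contractive_mean_def contractive_mean_axioms_def)
  have order: "\<forall>x. le x x" "\<forall>x y z. le x y \<longrightarrow> le y z \<longrightarrow> le x z"
    and closed: "closedin (prod_topology (Metric_space.mtopology UNIV d) (Metric_space.mtopology UNIV d))
      {(x, y). le x y}"
    using assms(9) by (auto simp: closed_partial_order_def)
  have "monotone_mean le n (iter_ext d mu (n - k))" if "monotone_mean le k mu" "k \<le> n" for n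
    using monotone_mean_iter_ext[OF mu closed that(1), of "n - k"] that(2) by simp
  moreover have "le (iter_ext d mu (n - k) x) (iter_ext \<delta> nu (n - k) x)"
    if "Metric_space UNIV \<delta>" "Metric_space.mcomplete UNIV \<delta>"
      "is_mean k nu" "nonexpansive_mean \<delta> k nu" "coord_contractive \<delta> \<rho> k nu"
      "closedin (prod_topology (Metric_space.mtopology UNIV d) (Metric_space.mtopology UNIV \<delta>))
        {(x, y). le x y}"
      "monotone_mean le k mu \<or> monotone_mean le k nu" "\<forall>x. length x = k \<longrightarrow> le (mu x) (nu x)"
      "k \<le> n" "length x = n"
    for \<delta> nu n x
  proof -
    have "contractive_mean \<delta> \<rho> k nu"
      using that assms by (simp add: contractive_mean_def contractive_mean_axioms_def)
    then show ?thesis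
      using iter_ext_le_iter_ext[OF mu _ that(6) order that(7,8)] that(9,10) by simp
  qed
  ultimately show ?thesis
    by blast
qed

end
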